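(* For any time warps $f,g$: (a) $f\backslash g=f^{r}g\vee(\top f)^{r}\vee g^{o}$; (b) $g/f=g f^{\ell}\vee (f^{\ell})^{o}$.
   Context: Let $\overline{\omega}=\omega\cup\{\omega\}$ be the natural numbers with a top element $\omega$ adjoined, with its natural total order. A time warp is a monotone map $f\colon\overline{\omega}\to\overline{\omega}$ with $f(0)=0$ and $f(\omega)=\bigvee\{f(n)\mid n\in\omega\}$. The set $W$ of time warps is ordered pointwise, with $\vee$ the pointwise join and $fg:=f\circ g$; $\mathrm{id}$ is the identity and $\top$ maps every $p\ne0$ to $\omega$ and $0$ to $0$. The residuals $\backslash,/$ are the binary operations on $W$ satisfying, for all $f,g,h\in W$: $f\le h/g \iff fg\le h \iff g\le f\backslash h$. For a time warp $f$ define $f^{\ell}:=\mathrm{id}/f$, $f^{r}:=f\backslash\mathrm{id}$, and $f^{o}:=\top\backslash f$. *)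

theory Defs
  imports Main "HOL-Library.Extended_Nat"
begin

text \<open>The chain omega-bar is modelled by enat (finite naturals plus infinity).
  Time warps are functions enat to enat satisfying the predicate below;
  the order is the pointwise function order, join is pointwise sup,
  product is composition.\<close>

definition time_warp :: "(enat \<Rightarrow> enat) \<Rightarrow> bool" where
  "time_warp f \<longleftrightarrow> mono f \<and> f 0 = 0 \<and> f \<infinity> = (SUP n::nat. f (enat n))"

definition tw_top :: "enat \<Rightarrow> enat" where
  "tw_top p = (if p = 0 then 0 else \<infinity>)"

definition ldiv :: "(enat \<Rightarrow> enat) \<Rightarrow> (enat \<Rightarrow> enat) \<Rightarrow> (enat \<Rightarrow> enat)" where
  "ldiv f h = (THE k. time_warp k \<and> (\<forall>g. time_warp g \<longrightarrow> (g \<le> k \<longleftrightarrow> f \<circ> g \<le> h)))"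

definition rdiv :: "(enat \<Rightarrow> enat) \<Rightarrow> (enat \<Rightarrow> enat) \<Rightarrow> (enat \<Rightarrow> enat)" where
  "rdiv h g = (THE k. time_warp k \<and> (\<forall>f. time_warp f \<longrightarrow> (f \<le> k \<longleftrightarrow> f \<circ> g \<le> h)))"

definition tw_l :: "(enat \<Rightarrow> enat) \<Rightarrow> (enat \<Rightarrow> enat)" where
  "tw_l f = rdiv id f"

definition tw_r :: "(enat \<Rightarrow> enat) \<Rightarrow> (enat \<Rightarrow> enat)" where
  "tw_r f = ldiv f id"

definition tw_o :: "(enat \<Rightarrow> enat) \<Rightarrow> (enat \<Rightarrow> enat)" where
  "tw_o f = ldiv tw_top f"

end

theory Submission
  imports Defs
begin

(* A time warp f preserves nonempty suprema, so f q \<le> c iff q \<le> Sup {p. f p \<le> c}.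
  Hence both residuals exist and are computed pointwise: for finite p \<noteq> 0,
  (f\<setminus>h)(p) = Sup {q. f q \<le> h p} and (h/g)(p) = Inf {h q | p \<le> g q}, the value at \<omega> being
  forced by continuity. Time warps agreeing at finite nonzero arguments are equal, so (a)
  reduces to the case distinction g(p) = 0, finite nonzero, or \<omega>, and (b) to whether f ever
  reaches p. If it does, the least q with p \<le> f q is finite (f \<omega> is a supremum of finite
  values), so it is f^l(p) and the infimum defining (g/f)(p) is attained there. *)

lemma enat_le_Sup_iff:
  fixes S :: "enat set"
  assumes "S \<noteq> {}"
  shows "enat n \<le> Sup S \<longleftrightarrow> (\<exists>q\<in>S. enat n \<le> q)"
proof
  assume le: "enat n \<le> Sup S"
  show "\<exists>q\<in>S. enat n \<le> q"
  proof (cases n)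
    case 0
    then show ?thesis using assms by (auto simp: zero_enat_def[symmetric])
  next
    case (Suc m)
    then have "enat m < Sup S" using le by (simp add: Suc_ile_eq)
    then show ?thesis using Suc by (auto simp: less_Sup_iff Suc_ile_eq)
  qed
qed (auto intro: Sup_upper2)

lemma time_warp_mono: "time_warp f \<Longrightarrow> mono f"
  unfolding time_warp_def by simp

lemma time_warp_0: "time_warp f \<Longrightarrow> f 0 = 0"
  unfolding time_warp_def by simp

lemma time_warp_infinity: "time_warp f \<Longrightarrow> f \<infinity> = (SUP n. f (enat n))"
  unfolding time_warp_def by simp

lemma time_warp_le_if_enat_le:
  assumes "time_warp f" and "\<And>n. enat n \<le> p \<Longrightarrow> f (enat n) \<le> c"
  shows "f p \<le> c"
  using assms by (cases p) (auto simp: time_warp_infinity intro: SUP_least)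

lemma time_warp_le_iff:
  assumes "time_warp f" and "mono g"
  shows "f \<le> g \<longleftrightarrow> (\<forall>n. f (enat n) \<le> g (enat n))"
proof
  assume le: "\<forall>n. f (enat n) \<le> g (enat n)"
  have "f p \<le> g p" for p
    using assms(1) by (rule time_warp_le_if_enat_le) (use le assms(2) in \<open>meson monoD order_trans\<close>)
  then show "f \<le> g" by (simp add: le_fun_def)
qed (simp add: le_fun_def)

lemma time_warp_eqI:
  assumes "time_warp f" and "time_warp g" and "\<And>n. n \<noteq> 0 \<Longrightarrow> f (enat n) = g (enat n)"
  shows "f = g"
proof -
  have "f (enat n) = g (enat n)" for n
    using assms by (cases "n = 0") (simp_all add: zero_enat_def[symmetric] time_warp_0)
  then show ?thesis using assms(1,2) by (intro antisym) (simp_all add: time_warp_le_iff time_warp_mono)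
qed

lemma time_warp_Sup:
  assumes "time_warp f" and "S \<noteq> {}"
  shows "f (Sup S) = Sup (f ` S)"
proof (rule antisym)
  show "f (Sup S) \<le> Sup (f ` S)"
  proof (rule time_warp_le_if_enat_le[OF assms(1)])
    fix n assume "enat n \<le> Sup S"
    then obtain q where "q \<in> S" "enat n \<le> q" using enat_le_Sup_iff[OF assms(2)] by blast
    then show "f (enat n) \<le> Sup (f ` S)"
      using assms(1) by (meson SUP_upper2 monoD time_warp_mono)
  qed
  show "Sup (f ` S) \<le> f (Sup S)" using assms(1) by (simp add: mono_Sup time_warp_mono)
qed

lemma time_warp_comp:
  assumes "time_warp f" and "time_warp g"
  shows "time_warp (f \<circ> g)"
proof -
  have "f (g \<infinity>) = (SUP n. f (g (enat n)))"
    using assms time_warp_Sup[OF assms(1), of "range (\<lambda>n. g (enat n))"]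
    by (simp add: time_warp_infinity image_image)
  then show ?thesis
    using assms by (simp add: time_warp_def mono_def)
qed

lemma time_warp_sup:
  assumes "time_warp f" and "time_warp g"
  shows "time_warp (sup f g)"
  using assms unfolding time_warp_def mono_def
  by (auto simp: SUP_sup_distrib intro: le_supI1 le_supI2)

lemma time_warp_id: "time_warp id"
proof -
  have "(SUP n. enat n) = \<infinity>"
    by (simp add: top_enat_def[symmetric]) (metis less_infinityE enat_ord_simps(2) lessI top_enat_def)
  then show ?thesis by (simp add: time_warp_def mono_def)
qed

lemma time_warp_tw_top: "time_warp tw_top"
proof -
  have "tw_top (enat 1) \<le> (SUP n. tw_top (enat n))" by (rule SUP_upper) simp
  moreover have "tw_top (enat 1) = \<infinity>" by (simp add: tw_top_def zero_enat_def)
  ultimately have "(SUP n. tw_top (enat n)) = \<infinity>" by simp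
  then show ?thesis by (simp add: time_warp_def mono_def tw_top_def)
qed

lemma time_warp_le_iff_le_Sup:
  assumes "time_warp f"
  shows "f q \<le> c \<longleftrightarrow> q \<le> Sup {p. f p \<le> c}"
proof
  assume "q \<le> Sup {p. f p \<le> c}"
  then have "f q \<le> f (Sup {p. f p \<le> c})" using assms by (simp add: monoD time_warp_mono)
  also have "\<dots> = Sup (f ` {p. f p \<le> c})"
    using assms by (intro time_warp_Sup) (auto intro: exI[of _ 0] simp: time_warp_0)
  also have "\<dots> \<le> c" by (rule SUP_least) simp
  finally show "f q \<le> c" .
qed (simp add: Sup_upper)

lemma time_warp_exceeds_at_enat:
  assumes "time_warp f" and "enat n \<le> f p"
  shows "\<exists>m. enat n \<le> f (enat m)"
proof (cases p)
  case infinity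
  then have "enat n \<le> Sup (range (\<lambda>m. f (enat m)))" using assms by (simp add: time_warp_infinity)
  then show ?thesis by (subst (asm) enat_le_Sup_iff) auto
qed (use assms in blast)

definition cont_extension :: "(enat \<Rightarrow> enat) \<Rightarrow> enat \<Rightarrow> enat" where
  "cont_extension \<phi> p = (if p = \<infinity> then SUP n. \<phi> (enat n) else \<phi> p)"

lemma cont_extension_enat [simp]: "cont_extension \<phi> (enat n) = \<phi> (enat n)"
  by (simp add: cont_extension_def)

lemma time_warp_cont_extension:
  assumes "mono \<phi>" and "\<phi> 0 = 0"
  shows "time_warp (cont_extension \<phi>)"
proof -
  have "cont_extension \<phi> x \<le> cont_extension \<phi> y" if "x \<le> y" for x y
  proof (cases y)
    case (enat m)
    with that obtain k where "x = enat k" by (cases x) auto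
    then show ?thesis using enat that assms(1) by (simp add: monoD)
  next
    case infinity
    then show ?thesis by (cases x) (auto simp: cont_extension_def intro: SUP_upper)
  qed
  then show ?thesis using assms(2) by (simp add: time_warp_def mono_def cont_extension_def)
qed

lemma ldiv_eqI:
  assumes "time_warp k" and "\<And>g. time_warp g \<Longrightarrow> g \<le> k \<longleftrightarrow> f \<circ> g \<le> h"
  shows "ldiv f h = k"
  unfolding ldiv_def
proof (rule the_equality)
  fix k' assume k': "time_warp k' \<and> (\<forall>g. time_warp g \<longrightarrow> (g \<le> k' \<longleftrightarrow> f \<circ> g \<le> h))"
  then show "k' = k" using assms by (meson antisym order_refl)
qed (use assms in blast)

lemma rdiv_eqI:
  assumes "time_warp k" and "\<And>f. time_warp f \<Longrightarrow> f \<le> k \<longleftrightarrow> f \<circ> g \<le> h"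
  shows "rdiv h g = k"
  unfolding rdiv_def
proof (rule the_equality)
  fix k' assume k': "time_warp k' \<and> (\<forall>f. time_warp f \<longrightarrow> (f \<le> k' \<longleftrightarrow> f \<circ> g \<le> h))"
  then show "k' = k" using assms by (meson antisym order_refl)
qed (use assms in blast)

lemma
  assumes f: "time_warp f" and h: "time_warp h"
  shows time_warp_ldiv: "time_warp (ldiv f h)"
    and ldiv_enat: "ldiv f h (enat n) = (if n = 0 then 0 else Sup {q. f q \<le> h (enat n)})"
proof -
  define \<phi> where "\<phi> p = (if p = 0 then 0 else Sup {q. f q \<le> h p})" for p
  have "\<phi> x \<le> \<phi> y" if "x \<le> y" for x y
  proof -
    have "{q. f q \<le> h x} \<subseteq> {q. f q \<le> h y}"
      using that by (auto dest: monoD[OF time_warp_mono[OF h]] intro: order_trans)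
    then show ?thesis using that by (auto simp: \<phi>_def intro: Sup_subset_mono)
  qed
  then have tw: "time_warp (cont_extension \<phi>)"
    by (intro time_warp_cont_extension monoI) (simp_all add: \<phi>_def)
  have "ldiv f h = cont_extension \<phi>"
  proof (rule ldiv_eqI[OF tw])
    fix g assume g: "time_warp g"
    have pointwise: "g (enat n) \<le> \<phi> (enat n) \<longleftrightarrow> f (g (enat n)) \<le> h (enat n)" for n
    proof (cases "n = 0")
      case True
      then show ?thesis using f g h by (simp add: \<phi>_def zero_enat_def[symmetric] time_warp_0)
    next
      case False
      then show ?thesis
        using time_warp_le_iff_le_Sup[OF f, of "g (enat n)"] by (simp add: \<phi>_def zero_enat_def)
    qed
    have "g \<le> cont_extension \<phi> \<longleftrightarrow> (\<forall>n. g (enat n) \<le> \<phi> (enat n))"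
      using g tw by (simp add: time_warp_le_iff time_warp_mono)
    also have "\<dots> \<longleftrightarrow> (\<forall>n. f (g (enat n)) \<le> h (enat n))" by (simp add: pointwise)
    also have "\<dots> \<longleftrightarrow> f \<circ> g \<le> h"
      using f g h by (simp add: time_warp_le_iff time_warp_comp time_warp_mono)
    finally show "g \<le> cont_extension \<phi> \<longleftrightarrow> f \<circ> g \<le> h" .
  qed
  then show "time_warp (ldiv f h)" and "ldiv f h (enat n) = (if n = 0 then 0 else Sup {q. f q \<le> h (enat n)})"
    using tw by (simp_all add: \<phi>_def zero_enat_def)
qed

lemma
  assumes h: "time_warp h"
  shows time_warp_rdiv: "time_warp (rdiv h g)"
    and rdiv_enat: "rdiv h g (enat n) = (INF q \<in> {q. enat n \<le> g q}. h q)"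
proof -
  define \<phi> where "\<phi> p = (INF q \<in> {q. p \<le> g q}. h q)" for p
  have "\<phi> 0 \<le> h 0" unfolding \<phi>_def by (rule INF_lower) simp
  then have "\<phi> 0 = 0" using h by (simp add: time_warp_0)
  moreover have "mono \<phi>" by (auto simp: \<phi>_def mono_def intro!: INF_superset_mono)
  ultimately have tw: "time_warp (cont_extension \<phi>)" by (intro time_warp_cont_extension)
  have "rdiv h g = cont_extension \<phi>"
  proof (rule rdiv_eqI[OF tw])
    fix k assume k: "time_warp k"
    have "k \<le> cont_extension \<phi> \<longleftrightarrow> (\<forall>n. k (enat n) \<le> \<phi> (enat n))"
      using k tw by (simp add: time_warp_le_iff time_warp_mono)
    also have "\<dots> \<longleftrightarrow> (\<forall>n q. enat n \<le> g q \<longrightarrow> k (enat n) \<le> h q)" by (auto simp: \<phi>_def le_INF_iff)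
    also have "\<dots> \<longleftrightarrow> (\<forall>q. k (g q) \<le> h q)"
      using k by (meson monoD order_trans time_warp_le_if_enat_le time_warp_mono)
    also have "\<dots> \<longleftrightarrow> k \<circ> g \<le> h" by (simp add: le_fun_def)
    finally show "k \<le> cont_extension \<phi> \<longleftrightarrow> k \<circ> g \<le> h" .
  qed
  then show "time_warp (rdiv h g)" and "rdiv h g (enat n) = (INF q \<in> {q. enat n \<le> g q}. h q)"
    using tw by (simp_all add: \<phi>_def)
qed

lemma tw_top_le_iff: "tw_top p \<le> c \<longleftrightarrow> p = 0 \<or> c = \<infinity>"
  by (simp add: tw_top_def)

lemma tw_o_enat:
  assumes "time_warp h"
  shows "tw_o h (enat n) = (if h (enat n) = \<infinity> then \<infinity> else 0)"
proof (cases "n = 0")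
  case True
  then show ?thesis
    using time_warp_ldiv[OF time_warp_tw_top assms] assms
    by (simp add: tw_o_def zero_enat_def[symmetric] time_warp_0)
next
  case False
  have "{q. tw_top q \<le> h (enat n)} = (if h (enat n) = \<infinity> then UNIV else {0})"
    by (auto simp: tw_top_le_iff)
  then show ?thesis
    using False by (simp add: tw_o_def ldiv_enat[OF time_warp_tw_top assms] top_enat_def[symmetric])
qed

lemma ldiv_eq_sup:
  assumes f: "time_warp f" and g: "time_warp g"
  shows "ldiv f g = sup (sup (tw_r f \<circ> g) (tw_r (tw_top \<circ> f))) (tw_o g)"
proof (rule time_warp_eqI)
  have tf: "time_warp (tw_top \<circ> f)" by (rule time_warp_comp[OF time_warp_tw_top f])
  show "time_warp (ldiv f g)" using f g by (rule time_warp_ldiv)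
  show "time_warp (sup (sup (tw_r f \<circ> g) (tw_r (tw_top \<circ> f))) (tw_o g))"
    unfolding tw_r_def tw_o_def
    by (intro time_warp_sup time_warp_comp time_warp_ldiv f g tf time_warp_id time_warp_tw_top)
  fix n :: nat assume "n \<noteq> 0"
  have lhs: "ldiv f g (enat n) = Sup {q. f q \<le> g (enat n)}"
    using \<open>n \<noteq> 0\<close> by (simp add: ldiv_enat[OF f g])
  have r_f: "tw_r f (enat m) = (if m = 0 then 0 else Sup {q. f q \<le> enat m})" for m
    by (simp add: tw_r_def ldiv_enat[OF f time_warp_id])
  have r_top_f: "tw_r (tw_top \<circ> f) (enat n) = Sup {q. f q = 0}"
    using \<open>n \<noteq> 0\<close> by (simp add: tw_r_def ldiv_enat[OF tf time_warp_id] tw_top_le_iff)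
  consider "g (enat n) = 0" | m where "g (enat n) = enat m" "m \<noteq> 0" | "g (enat n) = \<infinity>"
    by (metis enat.exhaust zero_enat_def)
  then show "ldiv f g (enat n) = sup (sup (tw_r f \<circ> g) (tw_r (tw_top \<circ> f))) (tw_o g) (enat n)"
  proof cases
    case 1
    then show ?thesis using r_f[of 0] by (simp add: lhs r_top_f tw_o_enat[OF g] zero_enat_def[symmetric] sup_enat_def)
  next
    case (2 m)
    have "Sup {q. f q = 0} \<le> Sup {q. f q \<le> enat m}" by (rule Sup_subset_mono) auto
    then show ?thesis using 2 by (simp add: lhs r_f r_top_f tw_o_enat[OF g] sup_absorb1)
  next
    case 3
    then show ?thesis by (simp add: lhs tw_o_enat[OF g] top_enat_def[symmetric])
  qed
qed

lemma rdiv_eq_sup: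
  assumes f: "time_warp f" and g: "time_warp g"
  shows "rdiv g f = sup (g \<circ> tw_l f) (tw_o (tw_l f))"
proof (rule time_warp_eqI)
  have tl: "time_warp (tw_l f)" unfolding tw_l_def by (rule time_warp_rdiv[OF time_warp_id])
  show "time_warp (rdiv g f)" by (rule time_warp_rdiv[OF g])
  show "time_warp (sup (g \<circ> tw_l f) (tw_o (tw_l f)))"
    unfolding tw_o_def by (intro time_warp_sup time_warp_comp time_warp_ldiv g tl time_warp_tw_top)
  fix n
  define T where "T = {q. enat n \<le> f q}"
  have lhs: "rdiv g f (enat n) = (INF q \<in> T. g q)" by (simp add: rdiv_enat[OF g] T_def)
  have l_f: "tw_l f (enat n) = Inf T" by (simp add: tw_l_def rdiv_enat[OF time_warp_id] T_def)
  show "rdiv g f (enat n) = sup (g \<circ> tw_l f) (tw_o (tw_l f)) (enat n)"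
  proof (cases "T = {}")
    case True
    then show ?thesis by (simp add: lhs l_f tw_o_enat[OF tl] top_enat_def[symmetric])
  next
    case False
    then obtain m where "enat m \<in> T" using time_warp_exceeds_at_enat[OF f] by (auto simp: T_def)
    then have finite: "Inf T \<noteq> \<infinity>" by (metis Inf_lower infinity_ileE)
    have "Inf T \<in> T" using \<open>enat m \<in> T\<close> by (rule wellorder_InfI)
    then have "(INF q \<in> T. g q) = g (Inf T)"
      using g by (intro antisym INF_lower) (simp_all add: mono_Inf time_warp_mono)
    then show ?thesis by (simp add: lhs l_f tw_o_enat[OF tl] finite sup_enat_def)
  qed
qed

theorem lemma2p4:
  fixes f g :: "enat \<Rightarrow> enat"
  assumes "time_warp f" and "time_warp g"
  shows "ldiv f g = sup (sup (tw_r f \<circ> g) (tw_r (tw_top \<circ> f))) (tw_o g) \<and>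
         rdiv g f = sup (g \<circ> tw_l f) (tw_o (tw_l f))"
  using assms by (simp add: ldiv_eq_sup rdiv_eq_sup)

end
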